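(* Let $(p,q)=(6/5,2)$. Then for every $x \in [0,\pi_{6/5,2}/2]$, \[ \sin_{6/5,2}{(2x)} =\sqrt{1-\left(\frac{9-8\sin_{6/5,2}^2{x}-4\sin_{6/5,2}^2{x}\,\cos_{6/5,2}^{2/5}{x}} {9-8\sin_{6/5,2}^2{x}+8\sin_{6/5,2}^2{x}\,\cos_{6/5,2}^{2/5}{x}}\right)^3}. \]
   Context: For $1<p,q<\infty$ let $F_{p,q}(x)=\int_0^x (1-t^q)^{-1/p}\,dt$ for $x\in[0,1]$, and $\pi_{p,q}=2F_{p,q}(1)$. The generalized sine $\sin_{p,q}$ is defined on $[0,\pi_{p,q}/2]$ as the inverse function of $F_{p,q}$ (an increasing function onto $[0,1]$), extended to $(\pi_{p,q}/2,\pi_{p,q}]$ by $\sin_{p,q}x=\sin_{p,q}(\pi_{p,q}-x)$, and to all of $\mathbb{R}$ as an odd $2\pi_{p,q}$-periodic function. It is $C^1$, and the generalized cosine is $\cos_{p,q}x := \frac{d}{dx}\sin_{p,q}x$; it satisfies $|\cos_{p,q}x|^p+|\sin_{p,q}x|^q=1$, and $\cos_{p,q}x\ge 0$ on $[0,\pi_{p,q}/2]$. *)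

theory Defs
  imports "HOL-Analysis.Analysis"
begin

definition F_pq :: "real \<Rightarrow> real \<Rightarrow> real \<Rightarrow> real" where
  "F_pq p q x = integral {0..x} (\<lambda>t. (1 - t powr q) powr (-1 / p))"

definition pi_pq :: "real \<Rightarrow> real \<Rightarrow> real" where
  "pi_pq p q = 2 * F_pq p q 1"

definition sin_base :: "real \<Rightarrow> real \<Rightarrow> real \<Rightarrow> real" where
  "sin_base p q x = (THE y. y \<in> {0..1} \<and> F_pq p q y = x)"

definition sin_half :: "real \<Rightarrow> real \<Rightarrow> real \<Rightarrow> real" where
  "sin_half p q y = (if y \<le> pi_pq p q / 2 then sin_base p q y else sin_base p q (pi_pq p q - y))"

text \<open>Odd, 2 pi_{p,q}-periodic extension to all of R.\<close>
definition sin_pq :: "real \<Rightarrow> real \<Rightarrow> real \<Rightarrow> real" where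
  "sin_pq p q x =
     (let P = pi_pq p q; r = x - 2 * P * of_int \<lfloor>x / (2 * P)\<rfloor>
      in if r \<le> P then sin_half p q r else - sin_half p q (2 * P - r))"

definition cos_pq :: "real \<Rightarrow> real \<Rightarrow> real \<Rightarrow> real" where
  "cos_pq p q x = deriv (sin_pq p q) x"

end

theory Submission
  imports Defs
begin

text \<open>Write s = sin x and v = (cos x) powr (1/5) for (p, q) = (6/5, 2), so that s^2 = 1 - v^6,
  s' = v^5 and v' = -s/3 on (0, pi_pq/2). For Y = double_sin s v and Z = double_cos_root v,
  two polynomial identities give Y^2 = 1 - Z^6 and Y' = 2 Z^5. As F_pq' = (1 - t^2) powr (-5/6),
  the composite F_pq (Y x) has slope 2 sgn Z, and Z changes sign exactly once, at a point c where
  Y = 1. Hence F_pq (Y x) = 2 x up to c, which forces c = pi_pq/4, and F_pq (Y x) = pi_pq - 2 x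
  beyond; inverting F_pq on both pieces gives Y x = sin (2 x). Finally the right-hand side of the
  claim is sqrt (1 - Z^6) = Y, because the fraction in it equals poly_C v ^ 2 / poly_B v.\<close>

lemma DERIV_const_imp_affine:
  fixes f :: "real \<Rightarrow> real"
  assumes "a < b" "continuous_on {a..b} f"
    and "\<And>x. a < x \<Longrightarrow> x < b \<Longrightarrow> (f has_real_derivative k) (at x)"
    and "x \<in> {a..b}"
  shows "f x = f a + k * (x - a)"
proof -
  have "f x - k * x = f a - k * a"
    using assms by (intro DERIV_isconst2[where f = "\<lambda>x. f x - k * x"])
      (auto intro!: continuous_intros derivative_eq_intros)
  then show ?thesis by (simp add: algebra_simps)
qed

lemma power_powr_nonneg:
  fixes a :: real
  assumes "0 \<le> a" "n \<noteq> 0"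
  shows "(a powr r) ^ n = a powr (real n * r)"
  using assms by (cases "a = 0") (simp_all add: powr_power)

lemma sixth_power_powr_times_fifth_power:
  fixes z :: real
  assumes "z \<noteq> 0"
  shows "(z^6) powr (-5/6) * z^5 = sgn z"
proof -
  have "(z^6) powr (-5/6) = (\<bar>z\<bar> powr 6) powr (-5/6)"
    using assms by (simp add: power_even_abs_numeral)
  also have "\<dots> = \<bar>z\<bar> powr (-5)"
    by (simp only: powr_powr) simp
  also have "\<dots> = inverse (\<bar>z\<bar>^5)"
    using assms by (simp add: powr_minus)
  finally show ?thesis
    using assms by (cases "z > 0") (simp_all add: power_abs)
qed

section \<open>The generalized sine as the inverse of F_pq\<close>

locale generalized_sine =
  fixes p q :: real
  assumes p_gt_1: "1 < p" and q_ge_1: "1 \<le> q"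
begin

abbreviation F :: "real \<Rightarrow> real" where "F \<equiv> F_pq p q"

definition integrand :: "real \<Rightarrow> real" where
  "integrand t = (1 - t powr q) powr (-1 / p)"

lemma F_eq_integral: "F x = integral {0..x} integrand"
  unfolding F_pq_def integrand_def[abs_def] ..

lemma one_minus_powr_bounds:
  assumes "0 \<le> t" "t < 1"
  shows "0 < 1 - t powr q" "1 - t powr q \<le> 1" "1 - t \<le> 1 - t powr q"
proof -
  have "t powr q \<le> t"
    using assms q_ge_1 by (cases "t = 0") (auto intro: powr_le_one_le)
  then show "0 < 1 - t powr q" "1 - t powr q \<le> 1" "1 - t \<le> 1 - t powr q"
    using assms by auto
qed

lemma integrand_ge_1: "0 \<le> t \<Longrightarrow> t < 1 \<Longrightarrow> 1 \<le> integrand t"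
  using powr_mono2'[of "-1 / p" "1 - t powr q" 1] one_minus_powr_bounds[of t] p_gt_1
  unfolding integrand_def by simp

lemma continuous_on_integrand: "continuous_on {0..<1} integrand"
proof -
  have "continuous_on {0..<1} (\<lambda>t::real. 1 - t powr q)"
    using q_ge_1 by (intro continuous_on_diff continuous_on_const continuous_on_powr' continuous_on_id) auto
  then show ?thesis
    unfolding integrand_def
    by (rule continuous_on_powr[OF _ continuous_on_const]) (use one_minus_powr_bounds(1) in force)
qed

lemma integrand_le: "0 \<le> t \<Longrightarrow> t < 1 \<Longrightarrow> integrand t \<le> (1 - t) powr (-1 / p)"
  using one_minus_powr_bounds[of t] p_gt_1 unfolding integrand_def
  by (intro powr_mono2') auto

lemma has_integral_one_minus_powr:
  "((\<lambda>t::real. (1 - t) powr (-1 / p)) has_integral p / (p - 1)) {0..1}"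
proof -
  define G where "G t = - (p / (p - 1)) * (1 - t) powr (1 - 1 / p)" for t :: real
  have "((\<lambda>t. (1 - t) powr (-1 / p)) has_integral G 1 - G 0) {0..1}"
  proof (rule fundamental_theorem_of_calculus_interior)
    show "continuous_on {0..1} G"
      unfolding G_def using p_gt_1
      by (intro continuous_intros continuous_on_powr') (auto simp: field_simps)
    fix t :: real assume "t \<in> {0<..<1}"
    then have "(G has_real_derivative (1 - t) powr (-1 / p)) (at t)"
      unfolding G_def using p_gt_1
      by (auto intro!: derivative_eq_intros simp: divide_simps)
    then show "(G has_vector_derivative (1 - t) powr (-1 / p)) (at t)"
      by (simp add: has_real_derivative_iff_has_vector_derivative)
  qed simp
  then show ?thesis
    using p_gt_1 by (simp add: G_def)
qed

lemma integrable_integrand: "integrand integrable_on {0..1}"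
proof -
  have "{0..<1::real} - {0..1} = {}" "{0..1::real} - {0..<1} = {1}" by auto
  then have spike: "f integrable_on {0..<1} \<longleftrightarrow> f integrable_on {0..1}" for f :: "real \<Rightarrow> real"
    by (intro integrable_spike_set_eq) simp
  have "integrand integrable_on {0..<1}"
  proof (rule measurable_bounded_by_integrable_imp_integrable)
    show "integrand \<in> borel_measurable (lebesgue_on {0..<1})"
      by (rule continuous_imp_measurable_on_sets_lebesgue[OF continuous_on_integrand]) auto
    show "(\<lambda>t. (1 - t) powr (-1 / p)) integrable_on {0..<1}"
      using spike has_integral_one_minus_powr by blast
    fix t :: real assume "t \<in> {0..<1}"
    then show "norm (integrand t) \<le> (1 - t) powr (-1 / p)"
      using integrand_ge_1[of t] integrand_le[of t] by auto
  qed auto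
  then show ?thesis
    using spike by blast
qed

lemma continuous_on_F: "continuous_on {0..1} F"
  unfolding F_eq_integral[abs_def] by (rule indefinite_integral_continuous_1[OF integrable_integrand])

lemma F_has_real_derivative:
  assumes "0 < t" "t < 1"
  shows "(F has_real_derivative integrand t) (at t)"
proof -
  define b where "b = (1 + t) / 2"
  have b: "t < b" "b < 1" using assms by (auto simp: b_def)
  have "continuous_on {0..b} integrand"
    using continuous_on_integrand by (rule continuous_on_subset) (use b in auto)
  then have "(F has_real_derivative integrand t) (at t within {0..b})"
    unfolding F_eq_integral[abs_def] by (rule integral_has_real_derivative) (use assms b in auto)
  then have "(F has_real_derivative integrand t) (at t within {0<..<b})"
    by (rule DERIV_subset) auto
  then show ?thesis
    using at_within_open[of t "{0<..<b}"] assms b by auto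
qed

lemma F_0 [simp]: "F 0 = 0"
  by (simp add: F_eq_integral)

lemma strict_mono_on_F: "strict_mono_on {0..1} F"
proof (rule strict_mono_onI)
  fix a b :: real assume ab: "a \<in> {0..1}" "b \<in> {0..1}" "a < b"
  show "F a < F b"
  proof (rule DERIV_pos_imp_increasing_open[OF \<open>a < b\<close>])
    fix t assume "a < t" "t < b"
    then show "\<exists>y. (F has_real_derivative y) (at t) \<and> 0 < y"
      using F_has_real_derivative[of t] integrand_ge_1[of t] ab by force
  next
    show "continuous_on {a..b} F"
      using continuous_on_F by (rule continuous_on_subset) (use ab in auto)
  qed
qed

lemma F_1_pos: "0 < F 1"
  using strict_mono_onD[OF strict_mono_on_F, of 0 1] by simp

lemma pi_pq_eq: "pi_pq p q = 2 * F 1"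
  by (simp add: pi_pq_def)

lemma sin_base_F: "t \<in> {0..1} \<Longrightarrow> sin_base p q (F t) = t"
  unfolding sin_base_def
  by (rule the_equality) (use inj_onD[OF strict_mono_on_imp_inj_on[OF strict_mono_on_F]] in blast)+

lemma F_image: "F ` {0..1} = {0..F 1}"
proof
  show "F ` {0..1} \<subseteq> {0..F 1}"
  proof
    fix y assume "y \<in> F ` {0..1}"
    then obtain t where "t \<in> {0..1}" "y = F t" by blast
    then show "y \<in> {0..F 1}"
      using strict_mono_on_leD[OF strict_mono_on_F, of 0 t] strict_mono_on_leD[OF strict_mono_on_F, of t 1]
      by auto
  qed
  show "{0..F 1} \<subseteq> F ` {0..1}"
  proof
    fix y assume "y \<in> {0..F 1}"
    then obtain t where "0 \<le> t" "t \<le> 1" "F t = y"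
      using IVT'[of F 0 y 1] continuous_on_F by auto
    then show "y \<in> F ` {0..1}" by force
  qed
qed

lemma
  assumes "y \<in> {0..F 1}"
  shows sin_base_in_unit: "sin_base p q y \<in> {0..1}" and F_sin_base: "F (sin_base p q y) = y"
proof -
  obtain t where "t \<in> {0..1}" "y = F t" using assms F_image by blast
  then show "sin_base p q y \<in> {0..1}" "F (sin_base p q y) = y"
    by (simp_all add: sin_base_F)
qed

lemma sin_base_0 [simp]: "sin_base p q 0 = 0" and sin_base_F_1 [simp]: "sin_base p q (F 1) = 1"
  using sin_base_F[of 0] sin_base_F[of 1] by simp_all

lemma strict_mono_on_sin_base: "strict_mono_on {0..F 1} (sin_base p q)"
proof (rule strict_mono_onI)
  fix x y assume xy: "x \<in> {0..F 1}" "y \<in> {0..F 1}" "x < y"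
  show "sin_base p q x < sin_base p q y"
  proof (rule ccontr)
    assume "\<not> sin_base p q x < sin_base p q y"
    then have "F (sin_base p q y) \<le> F (sin_base p q x)"
      using sin_base_in_unit xy by (intro strict_mono_on_leD[OF strict_mono_on_F]) auto
    then show False
      using F_sin_base xy by auto
  qed
qed

lemma continuous_on_sin_base: "continuous_on {0..F 1} (sin_base p q)"
  using continuous_on_inv[OF continuous_on_F compact_Icc, of "sin_base p q"] sin_base_F F_image
  by simp

lemma sin_base_has_real_derivative:
  assumes "0 < y" "y < F 1"
  shows "(sin_base p q has_real_derivative (1 - sin_base p q y powr q) powr (1 / p)) (at y)"
proof -
  let ?s = "sin_base p q y"
  have s: "?s \<in> {0..1}" "F ?s = y" using sin_base_in_unit[of y] F_sin_base[of y] assms by auto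
  have s_interior: "0 < ?s" "?s < 1" using s assms by (auto simp: order.order_iff_strict)
  have "(sin_base p q has_real_derivative inverse (integrand ?s)) (at y)"
  proof (rule DERIV_inverse_function[where f=F and a=0 and b="F 1"])
    show "(F has_real_derivative integrand ?s) (at ?s)"
      using F_has_real_derivative s_interior by blast
    show "integrand ?s \<noteq> 0"
      using integrand_ge_1[of ?s] s_interior by auto
    show "isCont (sin_base p q) y"
      using continuous_on_interior[OF continuous_on_sin_base, of y] assms by auto
    fix z assume "0 < z" "z < F 1"
    then show "F (sin_base p q z) = z" using F_sin_base by auto
  qed (use assms in auto)
  then show ?thesis
    by (simp add: integrand_def powr_minus_divide flip: powr_minus)
qed

lemma sin_pq_eq_sin_half:
  assumes "0 \<le> y" "y \<le> pi_pq p q"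
  shows "sin_pq p q y = sin_half p q y"
proof -
  have "\<lfloor>y / (2 * pi_pq p q)\<rfloor> = 0"
    using assms F_1_pos by (simp add: floor_eq_iff pi_pq_eq field_simps)
  then show ?thesis
    using assms unfolding sin_pq_def Let_def by simp
qed

lemma sin_pq_eq_sin_base: "y \<in> {0..F 1} \<Longrightarrow> sin_pq p q y = sin_base p q y"
  using sin_pq_eq_sin_half[of y] F_1_pos by (simp add: pi_pq_eq sin_half_def)

lemma sin_pq_reflect: "y \<in> {F 1..2 * F 1} \<Longrightarrow> sin_pq p q y = sin_base p q (2 * F 1 - y)"
  using sin_pq_eq_sin_half[of y] sin_pq_eq_sin_base[of "F 1"] F_1_pos
  by (cases "y = F 1") (auto simp: pi_pq_eq sin_half_def)

lemma sin_pq_has_real_derivative: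
  assumes "0 < y" "y < F 1"
  shows "(sin_pq p q has_real_derivative (1 - sin_pq p q y powr q) powr (1 / p)) (at y)"
proof -
  have "(sin_pq p q has_real_derivative (1 - sin_base p q y powr q) powr (1 / p)) (at y)"
    by (rule has_field_derivative_transform_within_open[OF sin_base_has_real_derivative[OF assms],
          of "{0<..<F 1}"]) (use assms sin_pq_eq_sin_base in auto)
  then show ?thesis
    using assms sin_pq_eq_sin_base[of y] by simp
qed

lemma cos_pq_eq_interior:
  assumes "0 < y" "y < F 1"
  shows "cos_pq p q y = (1 - sin_pq p q y powr q) powr (1 / p)"
  unfolding cos_pq_def using sin_pq_has_real_derivative[OF assms] by (rule DERIV_imp_deriv)

lemma one_minus_sin_base_le:
  assumes "0 < k" "k < F 1"
  shows "1 - sin_base p q (F 1 - k) \<le> k * (1 - sin_base p q (F 1 - k) powr q) powr (1 / p)"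
proof -
  define a where "a = F 1 - k"
  have a: "0 < a" "a < F 1" using assms by (auto simp: a_def)
  have "\<exists>l z. a < z \<and> z < F 1 \<and> (sin_base p q has_real_derivative l) (at z) \<and>
      sin_base p q (F 1) - sin_base p q a = (F 1 - a) * l"
  proof (rule MVT[OF a(2)])
    show "continuous_on {a..F 1} (sin_base p q)"
      using continuous_on_sin_base by (rule continuous_on_subset) (use a in auto)
    fix z assume "a < z" "z < F 1"
    then show "sin_base p q differentiable (at z)"
      using sin_base_has_real_derivative[of z] a real_differentiable_def by auto
  qed
  then obtain l z where z: "a < z" "z < F 1" "(sin_base p q has_real_derivative l) (at z)"
    and mvt: "1 - sin_base p q a = k * l"
    by (auto simp: a_def)
  have l: "l = (1 - sin_base p q z powr q) powr (1 / p)"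
    using DERIV_unique[OF z(3) sin_base_has_real_derivative] a z by auto
  have "0 \<le> sin_base p q a" "sin_base p q a < sin_base p q z" "sin_base p q z \<le> 1"
    using sin_base_in_unit[of a] sin_base_in_unit[of z] strict_mono_onD[OF strict_mono_on_sin_base, of a z] a z
    by auto
  then have "sin_base p q a powr q \<le> sin_base p q z powr q" "sin_base p q z powr q \<le> 1"
    using q_ge_1 by (auto intro: powr_mono2 powr_le1)
  then have "(1 - sin_base p q z powr q) powr (1 / p) \<le> (1 - sin_base p q a powr q) powr (1 / p)"
    using p_gt_1 by (intro powr_mono2) auto
  then show ?thesis
    using mvt l assms by (simp add: a_def mult_left_mono)
qed

(* sin_pq is symmetric about F 1, and there its difference quotients are squeezed to 0 by
   one_minus_sin_base_le. *)
lemma cos_pq_F_1: "cos_pq p q (F 1) = 0"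
proof -
  define E where "E h = (1 - sin_base p q (F 1 - \<bar>h\<bar>) powr q) powr (1 / p)" for h
  have sin_base_unit: "sin_base p q (F 1 - \<bar>h\<bar>) \<in> {0..1}" if "h \<in> {-F 1..F 1}" for h
    using sin_base_in_unit that by auto
  have "continuous_on {-F 1..F 1} (\<lambda>h. F 1 - \<bar>h\<bar>)"
    by (intro continuous_intros)
  then have "continuous_on {-F 1..F 1} (\<lambda>h. sin_base p q (F 1 - \<bar>h\<bar>))"
    by (rule continuous_on_compose2[OF continuous_on_sin_base]) force+
  then have "continuous_on {-F 1..F 1} E"
    unfolding E_def using sin_base_unit q_ge_1 p_gt_1
    by (intro continuous_on_powr' continuous_intros) (auto intro: powr_le1)
  then have "(E \<longlongrightarrow> E 0) (at 0)"
    using continuous_on_interior[of "{-F 1..F 1}" E 0] F_1_pos by (auto simp: isCont_def)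
  then have E_tendsto: "(E \<longlongrightarrow> 0) (at 0)"
    using p_gt_1 by (simp add: E_def)
  have sin_pq_F_1: "sin_pq p q (F 1) = 1"
    using sin_pq_eq_sin_base[of "F 1"] F_1_pos by simp
  have "\<forall>\<^sub>F h in at 0. norm ((sin_pq p q (F 1 + h) - sin_pq p q (F 1)) / h) \<le> E h"
    unfolding eventually_at
  proof (intro exI[of _ "F 1"] conjI F_1_pos ballI impI)
    fix h :: real assume h: "h \<noteq> 0 \<and> dist h 0 < F 1"
    then have "h \<in> {-F 1..F 1}" by auto
    have "sin_pq p q (F 1 + h) = sin_base p q (F 1 - \<bar>h\<bar>)"
      using h sin_pq_eq_sin_base[of "F 1 + h"] sin_pq_reflect[of "F 1 + h"] by (cases "h < 0") auto
    then have "norm ((sin_pq p q (F 1 + h) - sin_pq p q (F 1)) / h)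
        = (1 - sin_base p q (F 1 - \<bar>h\<bar>)) / \<bar>h\<bar>"
      using sin_pq_F_1 sin_base_unit[OF \<open>h \<in> {-F 1..F 1}\<close>] h by (simp add: abs_div)
    also have "\<dots> \<le> E h"
      using one_minus_sin_base_le[of "\<bar>h\<bar>"] h by (simp add: E_def divide_le_eq mult.commute)
    finally show "norm ((sin_pq p q (F 1 + h) - sin_pq p q (F 1)) / h) \<le> E h" .
  qed
  then have "((\<lambda>h. (sin_pq p q (F 1 + h) - sin_pq p q (F 1)) / h) \<longlongrightarrow> 0) (at 0)"
    using E_tendsto by (rule Lim_null_comparison)
  then show ?thesis
    unfolding cos_pq_def by (intro DERIV_imp_deriv) (simp add: DERIV_def)
qed

lemma cos_pq_eq:
  assumes "0 < y" "y \<le> F 1"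
  shows "cos_pq p q y = (1 - sin_pq p q y powr q) powr (1 / p)"
  using cos_pq_eq_interior[of y] cos_pq_F_1 sin_pq_eq_sin_base[of "F 1"] assms
  by (cases "y = F 1") auto

lemma sin_pq_double_eqI:
  assumes cont: "continuous_on {0..F 1} Y" and range: "\<And>y. y \<in> {0..F 1} \<Longrightarrow> Y y \<in> {0..1}"
    and "Y 0 = 0" "0 < c" "c < F 1" "Y c = 1"
    and rising: "\<And>y. 0 < y \<Longrightarrow> y < c \<Longrightarrow> ((\<lambda>y. F (Y y)) has_real_derivative 2) (at y)"
    and falling: "\<And>y. c < y \<Longrightarrow> y < F 1 \<Longrightarrow> ((\<lambda>y. F (Y y)) has_real_derivative -2) (at y)"
    and y: "y \<in> {0..F 1}"
  shows "sin_pq p q (2 * y) = Y y"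
proof -
  have FY_cont: "continuous_on {0..F 1} (\<lambda>y. F (Y y))"
    using continuous_on_compose2[OF continuous_on_F cont] range by blast
  have FY_rising: "F (Y y) = 2 * y" if "y \<in> {0..c}" for y
    using DERIV_const_imp_affine[of 0 c "\<lambda>y. F (Y y)" 2 y] continuous_on_subset[OF FY_cont] rising
      that assms by auto
  have "c = F 1 / 2"
    using FY_rising[of c] assms by auto
  then have FY_falling: "F (Y y) = 2 * F 1 - 2 * y" if "y \<in> {c..F 1}" for y
    using DERIV_const_imp_affine[of c "F 1" "\<lambda>y. F (Y y)" "-2" y] continuous_on_subset[OF FY_cont]
      falling that assms by auto
  show ?thesis
  proof (cases "y \<le> c")
    case True
    then have "sin_pq p q (2 * y) = sin_base p q (F (Y y))"
      using FY_rising[of y] sin_pq_eq_sin_base[of "2 * y"] y \<open>c = F 1 / 2\<close> by auto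
    then show ?thesis using sin_base_F range y by simp
  next
    case False
    then have "sin_pq p q (2 * y) = sin_base p q (F (Y y))"
      using FY_falling[of y] sin_pq_reflect[of "2 * y"] y \<open>c = F 1 / 2\<close> by auto
    then show ?thesis using sin_base_F range y by simp
  qed
qed

end

section \<open>Duplication polynomials\<close>

(* Duplication formulas for (p, q) = (6/5, 2): if v = cos x ^ (1/5), so that sin x ^ 2 = 1 - v ^ 6,
   then sin (2 x) = double_sin (sin x) v and cos (2 x) ^ (1/5) = double_cos_root v. *)

definition poly_C :: "real \<Rightarrow> real" where "poly_C v = 2 * v^4 + 2 * v^2 - 1"
definition poly_B :: "real \<Rightarrow> real" where "poly_B v = 1 + 8 * v^2 + 8 * v^6 - 8 * v^8"
definition poly_P :: "real \<Rightarrow> real" where "poly_P v = 1 + 2 * v^2 + 6 * v^4 - 4 * v^6 + 4 * v^8"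

definition double_sin :: "real \<Rightarrow> real \<Rightarrow> real" where
  "double_sin s v = 6 * s * v * poly_P v * poly_B v powr (-3/2)"

definition double_cos_root :: "real \<Rightarrow> real" where
  "double_cos_root v = poly_C v * poly_B v powr (-1/2)"

lemma poly_B_ge_1: "0 \<le> v \<Longrightarrow> v \<le> 1 \<Longrightarrow> 1 \<le> poly_B v"
  using power_decreasing[of 6 8 v] unfolding poly_B_def by simp

lemma poly_P_pos:
  assumes "0 \<le> v" "v \<le> 1"
  shows "0 < poly_P v"
proof -
  have "v^6 \<le> v^4" "0 \<le> v^2" "0 \<le> v^4" "0 \<le> v^8" using assms by (simp_all add: power_decreasing)
  then show ?thesis unfolding poly_P_def by linarith
qed

lemma poly_C_strict_mono: "0 \<le> u \<Longrightarrow> u < w \<Longrightarrow> poly_C u < poly_C w"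
  using power_strict_mono[of u w 4] power_strict_mono[of u w 2] unfolding poly_C_def by simp

lemma poly_duplication_identity: "poly_B v ^ 3 - poly_C v ^ 6 = (1 - v^6) * (6 * v * poly_P v)^2"
  unfolding poly_B_def poly_C_def poly_P_def by algebra

(* Numerator of the quotient rule for 6 s v P(v) / B(v) powr (3/2), with s' = v^5 and v' = -s/3. *)
lemma double_sin_derivative_identity:
  assumes "s^2 = 1 - v^6"
  shows "(6 * v^6 * poly_P v - 2 * s^2 * poly_P v
      - 2 * s^2 * v * (4 * v + 24 * v^3 - 24 * v^5 + 32 * v^7)) * poly_B v
    + 3 * s^2 * v * poly_P v * (16 * v + 48 * v^5 - 64 * v^7) = 2 * poly_C v ^ 5"
  using assms unfolding poly_B_def poly_C_def poly_P_def by algebra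

lemma double_sin_nonneg: "0 \<le> s \<Longrightarrow> 0 \<le> v \<Longrightarrow> v \<le> 1 \<Longrightarrow> 0 \<le> double_sin s v"
  using poly_P_pos[of v] unfolding double_sin_def by simp

lemma double_sin_sq:
  assumes "s^2 = 1 - v^6" "0 \<le> v" "v \<le> 1"
  shows "double_sin s v ^ 2 = 1 - double_cos_root v ^ 6"
proof -
  define B where "B = poly_B v"
  have "0 < B" using poly_B_ge_1 assms unfolding B_def by force
  then have B_powr: "(B powr (-3/2))^2 = inverse (B^3)" "(B powr (-1/2))^6 = inverse (B^3)"
    unfolding powr_power[OF less_imp_neq[OF \<open>0 < B\<close>, symmetric]] by (simp_all add: powr_minus)
  have "double_sin s v ^ 2 = s^2 * (6 * v * poly_P v)^2 * inverse (B^3)"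
    unfolding double_sin_def B_def[symmetric] using B_powr by (simp add: power_mult_distrib)
  also have "\<dots> = (B^3 - poly_C v ^ 6) * inverse (B^3)"
    unfolding assms(1) B_def poly_duplication_identity by simp
  also have "\<dots> = 1 - double_cos_root v ^ 6"
    unfolding double_cos_root_def B_def[symmetric] using B_powr \<open>0 < B\<close>
    by (simp add: power_mult_distrib field_simps)
  finally show ?thesis .
qed

lemma double_sin_le_1:
  assumes "s^2 = 1 - v^6" "0 \<le> v" "v \<le> 1"
  shows "double_sin s v \<le> 1"
proof -
  have "double_sin s v ^ 2 \<le> 1"
    using double_sin_sq[OF assms] by (simp add: zero_le_even_power)
  then show ?thesis
    by (simp add: power_le_one_iff abs_square_le_1)
qed

lemma double_sin_eq_1:
  assumes "s^2 = 1 - v^6" "0 \<le> s" "0 \<le> v" "v \<le> 1" "poly_C v = 0"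
  shows "double_sin s v = 1"
  using double_sin_sq[of s v] double_sin_nonneg[of s v] assms
  by (simp add: double_cos_root_def power2_eq_1_iff)

lemma sgn_double_cos_root: "0 \<le> v \<Longrightarrow> v \<le> 1 \<Longrightarrow> sgn (double_cos_root v) = sgn (poly_C v)"
  using poly_B_ge_1[of v] by (simp add: double_cos_root_def sgn_mult)

(* The hypothesis on c (standing for cos x powr (2/5)) is multiplied by s^2 so that it also holds
   at x = 0, where cos_pq is never evaluated. *)
lemma duplication_ratio_cube:
  assumes "s^2 = 1 - v^6" "0 \<le> v" "v \<le> 1" "s^2 * c = s^2 * v^2"
  shows "((9 - 8 * s^2 - 4 * s^2 * c) / (9 - 8 * s^2 + 8 * s^2 * c)) ^ 3 = double_cos_root v ^ 6"
proof -
  define B where "B = poly_B v"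
  have "0 < B" using poly_B_ge_1 assms unfolding B_def by force
  have "s^2 * c = (1 - v^6) * v^2"
    using assms(1,4) by simp
  then have num: "9 - 8 * s^2 - 4 * s^2 * c = poly_C v ^ 2"
    and den: "9 - 8 * s^2 + 8 * s^2 * c = B"
    unfolding assms(1) B_def poly_B_def poly_C_def by algebra+
  have "(B powr (-1/2))^6 = inverse (B^3)"
    unfolding powr_power[OF less_imp_neq[OF \<open>0 < B\<close>, symmetric]] using \<open>0 < B\<close> by (simp add: powr_minus)
  then show ?thesis
    unfolding num den double_cos_root_def B_def[symmetric] power_mult_distrib
    by (simp add: power_divide field_simps flip: power_mult)
qed

lemma double_sin_has_real_derivative:
  fixes s v :: "real \<Rightarrow> real"
  assumes ds: "(s has_real_derivative v x ^ 5) (at x)" and dv: "(v has_real_derivative - s x / 3) (at x)"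
    and sv: "s x ^ 2 = 1 - v x ^ 6" and "0 \<le> v x" "v x \<le> 1"
  shows "((\<lambda>x. double_sin (s x) (v x)) has_real_derivative 2 * double_cos_root (v x) ^ 5) (at x)"
proof -
  define B where "B = poly_B (v x)"
  define dN where "dN = 6 * v x^6 * poly_P (v x) - 2 * s x^2 * poly_P (v x)
      - 2 * s x^2 * v x * (4 * v x + 24 * v x^3 - 24 * v x^5 + 32 * v x^7)"
  define dB where "dB = 16 * v x + 48 * v x^5 - 64 * v x^7"
  have "0 < B" using poly_B_ge_1 assms unfolding B_def by force
  have "((\<lambda>x. poly_B (v x)) has_real_derivative dB * (- s x / 3)) (at x)"
    unfolding poly_B_def dB_def by (rule derivative_eq_intros dv refl | simp)+ (simp add: field_simps)
  from DERIV_fun_powr[OF this, of "-3/2"]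
  have dM: "((\<lambda>x. poly_B (v x) powr (-3/2)) has_real_derivative s x / 2 * dB * B powr (-5/2)) (at x)"
    using \<open>0 < B\<close> by (simp add: B_def mult_ac)
  have dP: "((\<lambda>x. poly_P (v x)) has_real_derivative
      (4 * v x + 24 * v x^3 - 24 * v x^5 + 32 * v x^7) * (- s x / 3)) (at x)"
    unfolding poly_P_def by (rule derivative_eq_intros dv refl | simp)+ (simp add: field_simps)
  have "((\<lambda>x. 6 * s x * v x * poly_P (v x)) has_real_derivative dN) (at x)"
    unfolding dN_def
    by (rule derivative_eq_intros ds dv dP refl)+ algebra
  from DERIV_mult[OF this dM]
  have "((\<lambda>x. double_sin (s x) (v x)) has_real_derivative
      dN * B powr (-3/2) + 6 * s x * v x * poly_P (v x) * (s x / 2 * dB * B powr (-5/2))) (at x)"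
    by (simp add: double_sin_def B_def)
  moreover have "dN * B powr (-3/2) + 6 * s x * v x * poly_P (v x) * (s x / 2 * dB * B powr (-5/2))
      = (dN * B + 3 * s x^2 * v x * poly_P (v x) * dB) * B powr (-5/2)"
    using \<open>0 < B\<close> powr_add[of B 1 "-5/2"] by (simp add: algebra_simps power2_eq_square)
  moreover have "dN * B + 3 * s x^2 * v x * poly_P (v x) * dB = 2 * poly_C (v x) ^ 5"
    unfolding dN_def B_def dB_def by (rule double_sin_derivative_identity[OF sv])
  moreover have "double_cos_root (v x) ^ 5 = poly_C (v x) ^ 5 * B powr (-5/2)"
    using \<open>0 < B\<close> by (simp add: double_cos_root_def B_def power_mult_distrib powr_power)
  ultimately show ?thesis by (simp add: ac_simps)
qed

section \<open>The case (p, q) = (6/5, 2)\<close>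

interpretation sin65: generalized_sine "6/5" 2
  by unfold_locales auto

(* cos_root y = cos_pq (6/5) 2 y ^ (1/5) on (0, pi_pq/2], but defined through sin_pq so that
   nothing about the derivative cos_pq at 0 is needed. *)

definition cos_root :: "real \<Rightarrow> real" where
  "cos_root y = (1 - (sin_pq (6/5) 2 y)^2) powr (1/6)"

lemma sin65_in_unit: "y \<in> {0..F_pq (6/5) 2 1} \<Longrightarrow> sin_pq (6/5) 2 y \<in> {0..1}"
  using sin65.sin_base_in_unit sin65.sin_pq_eq_sin_base by simp

lemma sin65_interior:
  assumes "0 < y" "y < F_pq (6/5) 2 1"
  shows "0 < sin_pq (6/5) 2 y" "sin_pq (6/5) 2 y < 1"
  using strict_mono_onD[OF sin65.strict_mono_on_sin_base, of 0 y]
    strict_mono_onD[OF sin65.strict_mono_on_sin_base, of y "F_pq (6/5) 2 1"] assms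
  by (simp_all add: sin65.sin_pq_eq_sin_base)

lemma continuous_on_sin65: "continuous_on {0..F_pq (6/5) 2 1} (sin_pq (6/5) 2)"
  using sin65.continuous_on_sin_base by (rule continuous_on_eq) (simp add: sin65.sin_pq_eq_sin_base)

lemma cos_root_bounds:
  assumes "y \<in> {0..F_pq (6/5) 2 1}"
  shows "0 \<le> cos_root y" "cos_root y \<le> 1"
  using sin65_in_unit[OF assms] unfolding cos_root_def by (auto intro: powr_le1 simp: power_le_one)

lemma sin65_sq: "y \<in> {0..F_pq (6/5) 2 1} \<Longrightarrow> (sin_pq (6/5) 2 y)^2 = 1 - cos_root y ^ 6"
  using sin65_in_unit[of y] unfolding cos_root_def by (simp add: power_powr_nonneg power_le_one)

lemma cos_pq_powr_two_fifths:
  assumes "0 < y" "y \<le> F_pq (6/5) 2 1"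
  shows "cos_pq (6/5) 2 y powr (2/5) = cos_root y ^ 2"
  using sin65.cos_pq_eq[OF assms] sin65_in_unit[of y] assms
  by (simp add: cos_root_def power_powr_nonneg power_le_one powr_powr)

lemma sin65_has_real_derivative:
  assumes "0 < y" "y < F_pq (6/5) 2 1"
  shows "(sin_pq (6/5) 2 has_real_derivative cos_root y ^ 5) (at y)"
  using sin65.sin_pq_has_real_derivative[OF assms] sin65_in_unit[of y] assms
  by (simp add: cos_root_def power_powr_nonneg power_le_one)

lemma cos_root_has_real_derivative:
  assumes "0 < y" "y < F_pq (6/5) 2 1"
  shows "(cos_root has_real_derivative - sin_pq (6/5) 2 y / 3) (at y)"
proof -
  let ?s = "sin_pq (6/5) 2 y"
  have "0 < 1 - ?s^2"
    using sin65_interior[OF assms] by (simp add: power_less_one_iff abs_square_less_1)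
  have "((\<lambda>y. 1 - (sin_pq (6/5) 2 y)^2) has_real_derivative - (2 * ?s * cos_root y ^ 5)) (at y)"
    by (rule derivative_eq_intros sin65_has_real_derivative[OF assms] refl | simp)+
  from DERIV_fun_powr[OF this \<open>0 < 1 - ?s^2\<close>, of "1/6"]
  have derivative: "(cos_root has_real_derivative
      1/6 * (1 - ?s^2) powr (1/6 - 1) * (- (2 * ?s * cos_root y ^ 5))) (at y)"
    unfolding cos_root_def[abs_def] by simp
  have "cos_root y ^ 5 * (1 - ?s^2) powr (1/6 - 1) = 1"
    using \<open>0 < 1 - ?s^2\<close> by (simp add: cos_root_def power_powr_nonneg flip: powr_add)
  then have "1/6 * (1 - ?s^2) powr (1/6 - 1) * (- (2 * ?s * cos_root y ^ 5)) = - ?s / 3"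
    by algebra
  then show ?thesis
    using derivative by (simp only:)
qed

lemma continuous_on_cos_root: "continuous_on {0..F_pq (6/5) 2 1} cos_root"
  unfolding cos_root_def[abs_def] using sin65_in_unit
  by (intro continuous_on_powr' continuous_intros continuous_on_sin65) (auto simp: power_le_one)

lemma continuous_on_double_sin65:
  "continuous_on {0..F_pq (6/5) 2 1} (\<lambda>y. double_sin (sin_pq (6/5) 2 y) (cos_root y))"
proof -
  have "continuous_on {0..F_pq (6/5) 2 1} (\<lambda>y. poly_B (cos_root y))"
    unfolding poly_B_def by (intro continuous_intros continuous_on_cos_root)
  moreover have "\<forall>y\<in>{0..F_pq (6/5) 2 1}. poly_B (cos_root y) \<noteq> 0"
    using poly_B_ge_1[OF cos_root_bounds] by fastforce
  ultimately show ?thesis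
    unfolding double_sin_def poly_P_def
    by (intro continuous_intros continuous_on_cos_root continuous_on_sin65)
qed

lemma cos_root_strict_antimono:
  assumes "0 \<le> a" "a < b" "b \<le> F_pq (6/5) 2 1"
  shows "cos_root b < cos_root a"
proof -
  have "sin_pq (6/5) 2 a < sin_pq (6/5) 2 b"
    using strict_mono_onD[OF sin65.strict_mono_on_sin_base, of a b] assms
    by (simp add: sin65.sin_pq_eq_sin_base)
  moreover have "0 \<le> sin_pq (6/5) 2 a" "sin_pq (6/5) 2 b \<le> 1"
    using sin65_in_unit[of a] sin65_in_unit[of b] assms by auto
  ultimately show ?thesis
    unfolding cos_root_def by (intro powr_less_mono2) (auto simp: power_le_one power_strict_mono)
qed

lemma cos_root_0: "cos_root 0 = 1"
  using sin65.F_1_pos by (simp add: cos_root_def sin65.sin_pq_eq_sin_base)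

lemma cos_root_F_1: "cos_root (F_pq (6/5) 2 1) = 0"
  using sin65.F_1_pos by (simp add: cos_root_def sin65.sin_pq_eq_sin_base)

lemma F_double_sin_has_real_derivative:
  assumes y: "0 < y" "y < F_pq (6/5) 2 1" and "poly_C (cos_root y) \<noteq> 0"
  shows "((\<lambda>y. F_pq (6/5) 2 (double_sin (sin_pq (6/5) 2 y) (cos_root y)))
    has_real_derivative 2 * sgn (poly_C (cos_root y))) (at y)"
proof -
  let ?s = "sin_pq (6/5) 2 y" and ?v = "cos_root y"
  let ?Y = "double_sin ?s ?v" and ?Z = "double_cos_root ?v"
  have y_unit: "y \<in> {0..F_pq (6/5) 2 1}" using y by auto
  note v_bounds = cos_root_bounds[OF y_unit]
  have "?Z \<noteq> 0"
    using sgn_double_cos_root[OF v_bounds] assms(3) by (auto simp: sgn_0_0)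
  have Y_sq: "?Y^2 = 1 - ?Z^6"
    using double_sin_sq[OF sin65_sq[OF y_unit] v_bounds] .
  have "0 < ?v"
    using cos_root_strict_antimono[of y "F_pq (6/5) 2 1"] cos_root_F_1 y by simp
  then have "0 < ?Y"
    using sin65_interior[OF y] poly_P_pos[OF v_bounds] poly_B_ge_1[OF v_bounds]
    unfolding double_sin_def by simp
  moreover have "?Y < 1"
  proof -
    have "0 < ?Z^6" using \<open>?Z \<noteq> 0\<close> by (simp add: zero_less_power_eq)
    then have "?Y^2 < 1" using Y_sq by linarith
    then show ?thesis
      using \<open>0 < ?Y\<close> by (simp add: abs_square_less_1)
  qed
  ultimately have "((\<lambda>y. F_pq (6/5) 2 (double_sin (sin_pq (6/5) 2 y) (cos_root y)))
      has_real_derivative sin65.integrand ?Y * (2 * ?Z^5)) (at y)"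
    using DERIV_chain2[OF sin65.F_has_real_derivative
        double_sin_has_real_derivative[OF sin65_has_real_derivative[OF y]
          cos_root_has_real_derivative[OF y] sin65_sq[OF y_unit] v_bounds]]
    by simp
  moreover have "sin65.integrand ?Y * (2 * ?Z^5) = 2 * sgn ?Z"
    using Y_sq \<open>0 < ?Y\<close> sixth_power_powr_times_fifth_power[OF \<open>?Z \<noteq> 0\<close>]
    by (simp add: sin65.integrand_def)
  ultimately show ?thesis
    using sgn_double_cos_root[OF v_bounds] by simp
qed

lemma poly_C_cos_root_sign_change:
  obtains c where "0 < c" "c < F_pq (6/5) 2 1" "poly_C (cos_root c) = 0"
    and "\<And>y. 0 \<le> y \<Longrightarrow> y < c \<Longrightarrow> 0 < poly_C (cos_root y)"
    and "\<And>y. c < y \<Longrightarrow> y \<le> F_pq (6/5) 2 1 \<Longrightarrow> poly_C (cos_root y) < 0"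
proof -
  let ?L = "F_pq (6/5) 2 1"
  have decreasing: "poly_C (cos_root b) < poly_C (cos_root a)" if "0 \<le> a" "a < b" "b \<le> ?L" for a b
    using poly_C_strict_mono cos_root_strict_antimono[OF that] cos_root_bounds[of b] that by auto
  have "continuous_on {0..?L} (\<lambda>y. poly_C (cos_root y))"
    unfolding poly_C_def by (intro continuous_intros continuous_on_cos_root)
  then obtain c where c: "0 \<le> c" "c \<le> ?L" "poly_C (cos_root c) = 0"
    using IVT2'[of "\<lambda>y. poly_C (cos_root y)" ?L 0 0] sin65.F_1_pos cos_root_0 cos_root_F_1
    by (auto simp: poly_C_def)
  moreover have "c \<noteq> 0" "c \<noteq> ?L"
    using c cos_root_0 cos_root_F_1 by (auto simp: poly_C_def)
  ultimately show ?thesis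
  proof (intro that[of c])
    fix y assume "0 \<le> y" "y < c"
    then show "0 < poly_C (cos_root y)" using decreasing[of y c] c by simp
  next
    fix y assume "c < y" "y \<le> ?L"
    then show "poly_C (cos_root y) < 0" using decreasing[of c y] c by simp
  qed auto
qed

lemma sin65_double:
  assumes "x \<in> {0..F_pq (6/5) 2 1}"
  shows "sin_pq (6/5) 2 (2 * x) = double_sin (sin_pq (6/5) 2 x) (cos_root x)"
proof -
  let ?L = "F_pq (6/5) 2 1"
  define Y where "Y y = double_sin (sin_pq (6/5) 2 y) (cos_root y)" for y
  have Y_unit: "Y y \<in> {0..1}" if "y \<in> {0..?L}" for y
    unfolding Y_def using double_sin_nonneg double_sin_le_1 sin65_sq[OF that]
      sin65_in_unit[OF that] cos_root_bounds[OF that] by simp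
  obtain c where c: "0 < c" "c < ?L" "poly_C (cos_root c) = 0"
    and C_pos: "\<And>y. 0 \<le> y \<Longrightarrow> y < c \<Longrightarrow> 0 < poly_C (cos_root y)"
    and C_neg: "\<And>y. c < y \<Longrightarrow> y \<le> ?L \<Longrightarrow> poly_C (cos_root y) < 0"
    using poly_C_cos_root_sign_change by auto
  have "Y c = 1"
    unfolding Y_def using double_sin_eq_1 sin65_sq[of c] sin65_in_unit[of c] cos_root_bounds[of c] c
    by simp
  have "Y 0 = 0"
    using sin65.F_1_pos by (simp add: Y_def double_sin_def sin65.sin_pq_eq_sin_base)
  show ?thesis
    unfolding Y_def[symmetric]
  proof (rule sin65.sin_pq_double_eqI[OF continuous_on_double_sin65[folded Y_def] Y_unit
        \<open>Y 0 = 0\<close> c(1,2) \<open>Y c = 1\<close> _ _ assms])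
    fix y assume "0 < y" "y < c"
    then show "((\<lambda>y. F_pq (6/5) 2 (Y y)) has_real_derivative 2) (at y)"
      using F_double_sin_has_real_derivative[of y] C_pos[of y] c unfolding Y_def by force
  next
    fix y assume "c < y" "y < ?L"
    then show "((\<lambda>y. F_pq (6/5) 2 (Y y)) has_real_derivative -2) (at y)"
      using F_double_sin_has_real_derivative[of y] C_neg[of y] c unfolding Y_def by force
  qed
qed

theorem theorem1p2:
  fixes x :: real
  assumes "0 \<le> x" and "x \<le> pi_pq (6/5) 2 / 2"
  shows "sin_pq (6/5) 2 (2 * x) =
    sqrt (1 - ((9 - 8 * (sin_pq (6/5) 2 x)^2 - 4 * (sin_pq (6/5) 2 x)^2 * (cos_pq (6/5) 2 x) powr (2/5))
             / (9 - 8 * (sin_pq (6/5) 2 x)^2 + 8 * (sin_pq (6/5) 2 x)^2 * (cos_pq (6/5) 2 x) powr (2/5))) ^ 3)"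
proof -
  let ?s = "sin_pq (6/5) 2 x" and ?c = "cos_pq (6/5) 2 x powr (2/5)" and ?v = "cos_root x"
  have x: "x \<in> {0..F_pq (6/5) 2 1}"
    using assms by (simp add: sin65.pi_pq_eq)
  have "?s^2 * ?c = ?s^2 * ?v^2"
  proof (cases "x = 0")
    case True
    then show ?thesis using sin65.F_1_pos by (simp add: sin65.sin_pq_eq_sin_base)
  next
    case False
    then show ?thesis using cos_pq_powr_two_fifths[of x] x by simp
  qed
  from duplication_ratio_cube[OF sin65_sq[OF x] cos_root_bounds[OF x] this]
  have "1 - ((9 - 8 * ?s^2 - 4 * ?s^2 * ?c) / (9 - 8 * ?s^2 + 8 * ?s^2 * ?c)) ^ 3 = double_sin ?s ?v ^ 2"
    using double_sin_sq[OF sin65_sq[OF x] cos_root_bounds[OF x]] by simp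
  moreover have "0 \<le> double_sin ?s ?v"
    using double_sin_nonneg sin65_in_unit[OF x] cos_root_bounds[OF x] by simp
  ultimately show ?thesis
    using sin65_double[OF x] by simp
qed

end
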